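(* Let $W$ be a positive word such that $W\doteq\Delta V$ for some positive word $V$. Then every node of the diagram $D(W)$ is incident with an edge labelled $\sigma_i$ for each $i=1,\dots,n-1$; that is, for every node $P$ of $D(W)$ and every $i$, either $P\sigma_i$ is a node of $D(W)$, or $P\doteq P'\sigma_i$ for some node $P'$ of $D(W)$.
   Context: Fix $n\ge 2$. $SB_n^+$ is the monoid with generators $\sigma_1,\dots,\sigma_{n-1},x_1,\dots,x_{n-1}$ and relations: $\sigma_i\sigma_j=\sigma_j\sigma_i$ and $x_ix_j=x_jx_i$ if $|i-j|>1$; $x_i\sigma_j=\sigma_jx_i$ if $|i-j|\ne 1$; $\sigma_i\sigma_{i+1}\sigma_i=\sigma_{i+1}\sigma_i\sigma_{i+1}$; $\sigma_i\sigma_{i+1}x_i=x_{i+1}\sigma_i\sigma_{i+1}$; $\sigma_{i+1}\sigma_ix_{i+1}=x_i\sigma_{i+1}\sigma_i$. Positive words are words in $\sigma_i,x_i$; $A\doteq B$ means equality in $SB_n^+$. $\Delta\equiv\sigma_1\cdots\sigma_{n-1}\,\sigma_1\cdots\sigma_{n-2}\cdots\sigma_1\sigma_2\,\sigma_1$. The (Cayley) diagram $D(W)$ of a positive word $W$ (Garside's diagram): its nodes are the elements $P$ of $SB_n^+$ that are left divisors of $W$ (i.e. $W\doteq PQ$ for some positive $Q$), including the empty word; for a generator $g\in\{\sigma_i,x_i\}$ there is a directed edge labelled $g$ from node $P$ to node $P'$ whenever $P'\doteq Pg$. *)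

theory Defs
  imports Main
begin

text \<open>Generators of the singular braid monoid SB_n^+: Sig i is sigma_i, X i is x_i.\<close>
datatype gen = Sig nat | X nat

definition valid_gen :: "nat \<Rightarrow> gen \<Rightarrow> bool" where
  "valid_gen n g = (case g of Sig i \<Rightarrow> 1 \<le> i \<and> i \<le> n - 1 | X i \<Rightarrow> 1 \<le> i \<and> i \<le> n - 1)"

definition valid_word :: "nat \<Rightarrow> gen list \<Rightarrow> bool" where
  "valid_word n w = (\<forall>g\<in>set w. valid_gen n g)"

inductive defrel :: "nat \<Rightarrow> gen list \<Rightarrow> gen list \<Rightarrow> bool" for n where
  ss_comm: "\<lbrakk>1 \<le> i; i \<le> n - 1; 1 \<le> j; j \<le> n - 1; i > j + 1 \<or> j > i + 1\<rbrakk>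
     \<Longrightarrow> defrel n [Sig i, Sig j] [Sig j, Sig i]"
| xx_comm: "\<lbrakk>1 \<le> i; i \<le> n - 1; 1 \<le> j; j \<le> n - 1; i > j + 1 \<or> j > i + 1\<rbrakk>
     \<Longrightarrow> defrel n [X i, X j] [X j, X i]"
| xs_comm: "\<lbrakk>1 \<le> i; i \<le> n - 1; 1 \<le> j; j \<le> n - 1; i \<noteq> j + 1; j \<noteq> i + 1\<rbrakk>
     \<Longrightarrow> defrel n [X i, Sig j] [Sig j, X i]"
| braid: "\<lbrakk>1 \<le> i; i + 1 \<le> n - 1\<rbrakk>
     \<Longrightarrow> defrel n [Sig i, Sig (i+1), Sig i] [Sig (i+1), Sig i, Sig (i+1)]"
| mixed1: "\<lbrakk>1 \<le> i; i + 1 \<le> n - 1\<rbrakk>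
     \<Longrightarrow> defrel n [Sig i, Sig (i+1), X i] [X (i+1), Sig i, Sig (i+1)]"
| mixed2: "\<lbrakk>1 \<le> i; i + 1 \<le> n - 1\<rbrakk>
     \<Longrightarrow> defrel n [Sig (i+1), Sig i, X (i+1)] [X i, Sig (i+1), Sig i]"

definition elem_step :: "nat \<Rightarrow> gen list \<Rightarrow> gen list \<Rightarrow> bool" where
  "elem_step n u v = (\<exists>a b l r. (defrel n l r \<or> defrel n r l) \<and> u = a @ l @ b \<and> v = a @ r @ b)"

definition eqw :: "nat \<Rightarrow> gen list \<Rightarrow> gen list \<Rightarrow> bool" where
  "eqw n = (elem_step n)\<^sup>*\<^sup>*"

definition Delta :: "nat \<Rightarrow> gen list" where
  "Delta n = concat (map (\<lambda>k. map Sig [1..<Suc k]) (rev [1..<n]))"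

text \<open>P is a node of D(W): P is a left divisor of W in SB_n^+.\<close>
definition node :: "nat \<Rightarrow> gen list \<Rightarrow> gen list \<Rightarrow> bool" where
  "node n W P = (valid_word n P \<and> (\<exists>Q. valid_word n Q \<and> eqw n W (P @ Q)))"

end

theory Submission
  imports Defs
begin

text \<open>The defining relations of SB_n^+ form a complemented presentation: two distinct generators
  a, b occur at the head of at most one relation a f(a,b) = b f(b,a). Dehornoy's cube condition
  holds for every triple of generators, as word reversing checks symbolically.
  An induction on word length then shows that SB_n^+ is left cancellative and that a f(a,b) is a
  least common right multiple of a and b, so the nodes of D(W) are closed under such lcms.

  Since W = Delta V, every sigma_i is a node. For P = P_0 g the induction hypothesis gives either
  that P_0 sigma_i is a node, and then so is the lcm P_0 g f(g, sigma_i), where f(g, sigma_i)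
  starts with sigma_i; or P_0 = P' sigma_i. In the latter case sigma_i commutes with g unless
  g is sigma_j or x_j with |i - j| = 1, and then the induction hypothesis for P' and sigma_j
  together with sigma_j sigma_i sigma_j = sigma_i sigma_j sigma_i and
  sigma_j sigma_i x_j = x_i sigma_j sigma_i moves a final sigma_i into place.\<close>

lemma elem_step_sym: "elem_step n u v \<Longrightarrow> elem_step n v u"
  unfolding elem_step_def by blast

lemma eqw_refl [simp]: "eqw n u u"
  unfolding eqw_def by simp

lemma eqw_trans [trans]: "eqw n u v \<Longrightarrow> eqw n v w \<Longrightarrow> eqw n u w"
  unfolding eqw_def by (rule rtranclp_trans)

lemma eqw_sym: "eqw n u v \<Longrightarrow> eqw n v u"
  unfolding eqw_def
  by (induction rule: rtranclp_induct) (auto intro: elem_step_sym converse_rtranclp_into_rtranclp)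

lemma defrel_eqw: "defrel n l r \<Longrightarrow> eqw n (A @ l @ B) (A @ r @ B)"
  unfolding eqw_def elem_step_def by blast

lemma elem_step_append: "elem_step n u v \<Longrightarrow> elem_step n (A @ u @ B) (A @ v @ B)"
  unfolding elem_step_def by (metis append.assoc)

lemma eqw_append: "eqw n u v \<Longrightarrow> eqw n (A @ u @ B) (A @ v @ B)"
  unfolding eqw_def
  by (induction rule: rtranclp_induct) (auto intro: elem_step_append rtranclp.rtrancl_into_rtrancl)

lemma eqw_append_left: "eqw n u v \<Longrightarrow> eqw n (A @ u) (A @ v)"
  using eqw_append[of n u v A "[]"] by simp

lemma eqw_append_right: "eqw n u v \<Longrightarrow> eqw n (u @ B) (v @ B)"
  using eqw_append[of n u v "[]" B] by simp

lemma eqw_Cons: "eqw n u v \<Longrightarrow> eqw n (a # u) (a # v)"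
  using eqw_append_left[of n u v "[a]"] by simp

lemma elem_step_length: "elem_step n u v \<Longrightarrow> length u = length v"
proof -
  have "defrel n l r \<Longrightarrow> length l = length r" for l r
    by (induction rule: defrel.induct) auto
  then show "elem_step n u v \<Longrightarrow> length u = length v"
    unfolding elem_step_def by fastforce
qed

lemma eqw_length: "eqw n u v \<Longrightarrow> length u = length v"
  unfolding eqw_def by (induction rule: rtranclp_induct) (auto dest: elem_step_length)

lemma elem_step_valid_word: "elem_step n u v \<Longrightarrow> valid_word n u = valid_word n v"
proof -
  have "defrel n l r \<Longrightarrow> valid_word n l \<and> valid_word n r" for l r
    by (induction rule: defrel.induct) (auto simp: valid_word_def valid_gen_def)
  then show "elem_step n u v \<Longrightarrow> valid_word n u = valid_word n v"
    unfolding elem_step_def by (fastforce simp: valid_word_def)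
qed

lemma eqw_valid_word: "eqw n u v \<Longrightarrow> valid_word n u = valid_word n v"
  unfolding eqw_def by (induction rule: rtranclp_induct) (auto dest: elem_step_valid_word)

section \<open>The complemented presentation\<close>

definition adjacent :: "nat \<Rightarrow> nat \<Rightarrow> bool" where
  "adjacent i j = (i = Suc j \<or> j = Suc i)"

lemma adjacent_irrefl [simp]: "\<not> adjacent i i"
  unfolding adjacent_def by auto

lemma adjacent_commute: "adjacent j i = adjacent i j"
  unfolding adjacent_def by auto

text \<open>The complement f(a,b) of the presentation: for distinct valid generators a and b there is
  exactly one defining relation of the form a f(a,b) = b f(b,a), except for the pairs x_i, x_(i+1),
  which have none (None).\<close>

definition complement :: "nat \<Rightarrow> gen \<Rightarrow> gen \<Rightarrow> gen list option" where
  "complement n a b =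
    (if a = b then Some []
     else if \<not> valid_gen n a \<or> \<not> valid_gen n b then None
     else (case a of
       Sig i \<Rightarrow> (case b of
          Sig j \<Rightarrow> if adjacent i j then Some [Sig j, Sig i] else Some [Sig j]
        | X j \<Rightarrow> if adjacent i j then Some [Sig j, X i] else Some [X j])
     | X i \<Rightarrow> (case b of
          Sig j \<Rightarrow> if adjacent i j then Some [Sig j, Sig i] else Some [Sig j]
        | X j \<Rightarrow> if adjacent i j then None else Some [X j])))"

lemma complement_self [simp]: "complement n a a = Some []"
  unfolding complement_def by simp

lemma complement_valid_gen:
  "complement n a b = Some u \<Longrightarrow> a \<noteq> b \<Longrightarrow> valid_gen n a \<and> valid_gen n b"
  unfolding complement_def by (auto split: if_splits)

lemma complement_Sig_hd:
  "complement n g (Sig i) = Some d \<Longrightarrow> g \<noteq> Sig i \<Longrightarrow> \<exists>d'. d = Sig i # d'"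
  by (cases g) (auto simp: complement_def split: if_splits)

lemma defrel_complement:
  "defrel n l r \<Longrightarrow> \<exists>a b u v. l = a # u \<and> r = b # v \<and> a \<noteq> b \<and>
     complement n a b = Some u \<and> complement n b a = Some v"
  by (induction rule: defrel.induct) (auto simp: complement_def valid_gen_def adjacent_def)

lemma complement_defrel:
  assumes "complement n a b = Some u" "complement n b a = Some v" "a \<noteq> b"
  shows "defrel n (a # u) (b # v) \<or> defrel n (b # v) (a # u)"
proof -
  have far: "Suc j < i \<or> Suc i < j" if "i \<noteq> j" "j \<noteq> Suc i" "i \<noteq> Suc j" for i j :: nat
    using that by arith
  show ?thesis
  proof (cases a; cases b)
    fix i j assume "a = Sig i" "b = Sig j"
    with assms show ?thesis
      apply (auto simp: complement_def valid_gen_def adjacent_def split: if_splits)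
      using defrel.braid[of i n] defrel.braid[of j n] defrel.ss_comm[of i n j] far[of i j] by auto
  next
    fix i j assume "a = Sig i" "b = X j"
    with assms show ?thesis
      apply (auto simp: complement_def valid_gen_def adjacent_def split: if_splits)
      using defrel.mixed1[of i n] defrel.mixed2[of j n] defrel.xs_comm[of j n i] by auto
  next
    fix i j assume "a = X i" "b = Sig j"
    with assms show ?thesis
      apply (auto simp: complement_def valid_gen_def adjacent_def split: if_splits)
      using defrel.mixed1[of j n] defrel.mixed2[of i n] defrel.xs_comm[of i n j] by auto
  next
    fix i j assume "a = X i" "b = X j"
    with assms show ?thesis
      apply (auto simp: complement_def valid_gen_def adjacent_def split: if_splits)
      using defrel.xx_comm[of i n j] far[of i j] by auto
  qed
qed

lemma eqw_complement:
  assumes "complement n a b = Some u" "complement n b a = Some v"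
  shows "eqw n (a # u) (b # v)"
proof (cases "a = b")
  case True
  with assms show ?thesis by simp
next
  case False
  from complement_defrel[OF assms False] show ?thesis
    using defrel_eqw[of n _ _ "[]" "[]"] eqw_sym by auto
qed

datatype reversal = Clash | Out_of_fuel | Reversed "gen list" "gen list"

text \<open>Right reversing of the signed word U^-1 V: every pattern u^-1 v is replaced by
  f(u,v) f(v,u)^-1, and the result A B^-1 is returned as Reversed A B.\<close>

fun right_reverse :: "nat \<Rightarrow> nat \<Rightarrow> gen list \<Rightarrow> gen list \<Rightarrow> reversal" where
  "right_reverse n 0 U V = Out_of_fuel"
| "right_reverse n (Suc f) [] V = Reversed V []"
| "right_reverse n (Suc f) (u # U) [] = Reversed [] (u # U)"
| "right_reverse n (Suc f) (u # U) (v # V) =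
    (case complement n u v of None \<Rightarrow> Clash | Some c \<Rightarrow>
     (case complement n v u of None \<Rightarrow> Clash | Some d \<Rightarrow>
      (case right_reverse n f U c of
         Reversed A1 B1 \<Rightarrow>
           (case right_reverse n f V (d @ B1) of
              Reversed A2 B2 \<Rightarrow> Reversed (A1 @ B2) A2
            | r \<Rightarrow> r)
       | r \<Rightarrow> r)))"

text \<open>Dehornoy's cube condition on the generators a', a, b, decided by reversing: when
  f(a',a)^-1 f(a',b) reverses to A1 B1^-1, the words f(a,a') A1 and f(b,a') B1 must be
  equivalent to f(a,b) C and f(b,a) C for a common C. A clash in the first reversal is harmless,
  since reversing is complete for words having a common multiple.\<close>

definition cube_condition :: "nat \<Rightarrow> gen \<Rightarrow> gen \<Rightarrow> gen \<Rightarrow> bool" where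
  "cube_condition n a' a b =
    (case (complement n a a', complement n a' a, complement n a' b, complement n b a') of
      (Some u, Some v, Some c', Some d') \<Rightarrow>
        (case right_reverse n 8 v c' of
           Clash \<Rightarrow> True
         | Out_of_fuel \<Rightarrow> False
         | Reversed A1 B1 \<Rightarrow>
             (case (complement n a b, complement n b a) of
                (Some c, Some d) \<Rightarrow>
                  (case right_reverse n 8 (u @ A1) c of
                     Reversed A C \<Rightarrow> A = [] \<and> right_reverse n 8 (d' @ B1) (d @ C) = Reversed [] []
                   | _ \<Rightarrow> False)
              | _ \<Rightarrow> False))
    | _ \<Rightarrow> False)"

lemma cube_condition_holds:
  assumes "a' \<noteq> a" "a' \<noteq> b" "a \<noteq> b" "valid_gen n a'" "valid_gen n a" "valid_gen n b"
    "complement n a' a \<noteq> None" "complement n a' b \<noteq> None"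
  shows "cube_condition n a' a b"
  \<comment> \<open>The indices stay symbolic: splitting on adjacency decides every reversal.\<close>
  using assms
  apply (cases a'; cases a; cases b)
         apply (simp_all add: valid_gen_def)
         apply (simp_all add: cube_condition_def complement_def numeral_eq_Suc valid_gen_def
      adjacent_commute split: if_split_asm if_split)
         apply (auto simp: adjacent_def)
  done

section \<open>Least common multiples of generators\<close>

text \<open>For words of length at most k, a f(a,b) = b f(b,a) is a least common right multiple of
  a and b; for a = b this is left cancellation.\<close>

definition lcm_upto :: "nat \<Rightarrow> nat \<Rightarrow> bool" where
  "lcm_upto n k = (\<forall>a b R Q. length R < k \<longrightarrow> eqw n (a # R) (b # Q) \<longrightarrow>
     (\<exists>c d Z. complement n a b = Some c \<and> complement n b a = Some d \<and>
        eqw n R (c @ Z) \<and> eqw n Q (d @ Z)))"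

lemma lcm_uptoD:
  assumes "lcm_upto n k" "length R < k" "eqw n (a # R) (b # Q)"
  obtains c d Z where "complement n a b = Some c" "complement n b a = Some d"
    "eqw n R (c @ Z)" "eqw n Q (d @ Z)"
  using assms unfolding lcm_upto_def by blast

lemma lcm_upto_left_cancel:
  assumes "lcm_upto n k"
  shows "length (U @ Y) \<le> k \<Longrightarrow> eqw n (U @ Y) (U @ Z) \<Longrightarrow> eqw n Y Z"
proof (induction U)
  case (Cons u U)
  then obtain W where "eqw n (U @ Y) W" "eqw n (U @ Z) W"
    using lcm_uptoD[OF assms, of "U @ Y" u u "U @ Z"] by auto
  then have "eqw n (U @ Y) (U @ Z)" by (meson eqw_sym eqw_trans)
  with Cons show ?case by simp
qed simp

lemma right_reverse_sound: "right_reverse n f U V = Reversed A B \<Longrightarrow> eqw n (U @ A) (V @ B)"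
proof (induction n f U V arbitrary: A B rule: right_reverse.induct)
  case (4 n f u U v V)
  from "4.prems" obtain c d A1 B1 A2 B2 where
    c: "complement n u v = Some c" and d: "complement n v u = Some d" and
    r1: "right_reverse n f U c = Reversed A1 B1" and
    r2: "right_reverse n f V (d @ B1) = Reversed A2 B2" and
    AB: "A = A1 @ B2" "B = A2"
    by (auto split: option.splits reversal.splits)
  have e1: "eqw n (U @ A1) (c @ B1)" using "4.IH"(1)[OF c d r1] .
  have e2: "eqw n (V @ A2) (d @ B1 @ B2)" using "4.IH"(2)[OF c d r1 r2] by simp
  have "eqw n ((u # U) @ A) (u # (U @ A1) @ B2)" using AB by simp
  also have "eqw n \<dots> (u # c @ B1 @ B2)" using eqw_Cons[OF eqw_append_right[OF e1]] by simp
  also have "eqw n \<dots> (v # d @ B1 @ B2)"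
    using eqw_append_right[OF eqw_complement[OF c d], of "B1 @ B2"] by simp
  also have "eqw n \<dots> (v # V @ A2)" using eqw_Cons[OF eqw_sym[OF e2]] .
  finally show ?case using AB by simp
qed auto

lemma right_reverse_complete:
  "lcm_upto n k \<Longrightarrow> length (U @ Y) \<le> k \<Longrightarrow> eqw n (U @ Y) (V @ Z) \<Longrightarrow>
   right_reverse n f U V \<noteq> Clash \<and>
   (\<forall>A B. right_reverse n f U V = Reversed A B \<longrightarrow> (\<exists>X. eqw n Y (A @ X) \<and> eqw n Z (B @ X)))"
proof (induction n f U V arbitrary: Y Z rule: right_reverse.induct)
  case (2 n f V)
  then show ?case by (auto intro!: exI[of _ Z])
next
  case (3 n f u U)
  then have "eqw n Z ((u # U) @ Y)" using eqw_sym by simp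
  then show ?case by (auto intro!: exI[of _ Y])
next
  case (4 n f u U v V)
  note lcm = "4.prems"(1)
  have len: "length (V @ Z) \<le> k" "length (U @ Y) \<le> k"
    using "4.prems"(2) eqw_length[OF "4.prems"(3)] by simp_all
  obtain c d X1 where c: "complement n u v = Some c" and d: "complement n v u = Some d"
    and e1: "eqw n (U @ Y) (c @ X1)" and e2: "eqw n (V @ Z) (d @ X1)"
    using lcm_uptoD[OF lcm, of "U @ Y" u v "V @ Z"] "4.prems"(2,3) by auto
  note IH1 = "4.IH"(1)[OF c d lcm len(2) e1]
  show ?case
  proof (cases "right_reverse n f U c")
    case Clash
    with IH1 show ?thesis by simp
  next
    case Out_of_fuel
    with c d show ?thesis by simp
  next
    case (Reversed A1 B1)
    with IH1 obtain X2 where y: "eqw n Y (A1 @ X2)" and x1: "eqw n X1 (B1 @ X2)" by auto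
    have e3: "eqw n (V @ Z) ((d @ B1) @ X2)"
      using eqw_trans[OF e2 eqw_append_left[OF x1]] by simp
    note IH2 = "4.IH"(2)[OF c d Reversed lcm len(1) e3]
    show ?thesis
    proof (cases "right_reverse n f V (d @ B1)")
      case Clash
      with IH2 show ?thesis by simp
    next
      case Out_of_fuel
      with c d Reversed show ?thesis by simp
    next
      case (Reversed A2 B2)
      with IH2 obtain X3 where z: "eqw n Z (A2 @ X3)" and x2: "eqw n X2 (B2 @ X3)" by auto
      have "eqw n Y ((A1 @ B2) @ X3)" using eqw_trans[OF y eqw_append_left[OF x2]] by simp
      with z c d \<open>right_reverse n f U c = Reversed A1 B1\<close> Reversed show ?thesis by auto
    qed
  qed
qed simp

lemma lcm_upto_cube:
  assumes lcm: "lcm_upto n k"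
    and u: "complement n a a' = Some u" and v: "complement n a' a = Some v"
    and c': "complement n a' b = Some c'" and d': "complement n b a' = Some d'"
    and distinct: "a' \<noteq> a" "a' \<noteq> b" "a \<noteq> b"
    and len: "length (v @ B) \<le> k"
    and e1: "eqw n (v @ B) (c' @ Z)" and e2: "eqw n Q (d' @ Z)"
  shows "\<exists>c d Z. complement n a b = Some c \<and> complement n b a = Some d \<and>
    eqw n (u @ B) (c @ Z) \<and> eqw n Q (d @ Z)"
proof -
  have "valid_gen n a" "valid_gen n a'" "valid_gen n b"
    using complement_valid_gen[OF u] complement_valid_gen[OF c'] distinct by auto
  with distinct v c' have cube: "cube_condition n a' a b"
    by (intro cube_condition_holds) auto
  note reversible = right_reverse_complete[OF lcm len e1, of 8]
  show ?thesis
  proof (cases "right_reverse n 8 v c'")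
    case (Reversed A1 B1)
    with reversible obtain X where bx: "eqw n B (A1 @ X)" and zx: "eqw n Z (B1 @ X)" by auto
    from cube Reversed u v c' d' obtain c d C where
      c: "complement n a b = Some c" and d: "complement n b a = Some d" and
      r1: "right_reverse n 8 (u @ A1) c = Reversed [] C" and
      r2: "right_reverse n 8 (d' @ B1) (d @ C) = Reversed [] []"
      unfolding cube_condition_def by (auto split: option.splits reversal.splits)
    have "eqw n (u @ B) (u @ A1 @ X)" using eqw_append_left[OF bx] .
    also have "eqw n \<dots> (c @ C @ X)" using eqw_append_right[OF right_reverse_sound[OF r1]] by simp
    finally have "eqw n (u @ B) (c @ C @ X)" .
    moreover have "eqw n Q (d' @ B1 @ X)" using eqw_trans[OF e2 eqw_append_left[OF zx]] .
    then have "eqw n Q (d @ C @ X)"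
      using eqw_trans eqw_append_right[OF right_reverse_sound[OF r2]] by fastforce
    ultimately show ?thesis using c d by blast
  next
    case Clash
    with reversible show ?thesis by simp
  next
    case Out_of_fuel
    with cube u v c' d' show ?thesis by (simp add: cube_condition_def)
  qed
qed

lemma lcm_upto_transfer:
  assumes lcm: "lcm_upto n k"
    and u: "complement n a a' = Some u" and v: "complement n a' a = Some v" and "a' \<noteq> a"
    and c': "complement n a' b = Some c'" and d': "complement n b a' = Some d'"
    and len: "length (v @ B) \<le> k"
    and e1: "eqw n (v @ B) (c' @ Z)" and e2: "eqw n Q (d' @ Z)"
  shows "\<exists>c d Z. complement n a b = Some c \<and> complement n b a = Some d \<and>
    eqw n (u @ B) (c @ Z) \<and> eqw n Q (d @ Z)"
proof (cases "a' = b")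
  case True
  with c' d' e1 e2 have "eqw n Q (v @ B)" by (auto intro: eqw_trans eqw_sym)
  with True u v show ?thesis by (auto intro!: exI[of _ B])
next
  case a'b: False
  show ?thesis
  proof (cases "a = b")
    case True
    with c' d' u v have "c' = v" "d' = u" by simp_all
    with e1 len have "eqw n B Z" by (auto intro: lcm_upto_left_cancel[OF lcm])
    with e2 \<open>d' = u\<close> True show ?thesis by (auto intro!: exI[of _ "u @ Z"] eqw_append_left)
  next
    case False
    show ?thesis by (rule lcm_upto_cube[OF lcm u v c' d' \<open>a' \<noteq> a\<close> a'b False len e1 e2])
  qed
qed

text \<open>Induction along the chain of elementary steps from a R to b Q: steps behind the first letter
  are absorbed by the induction hypothesis, steps at the head are handled by lcm_upto_transfer.\<close>

lemma lcm_upto_extend: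
  assumes lcm: "lcm_upto n k" and "eqw n w (b # Q)"
  shows "w = a # R \<Longrightarrow> length R = k \<Longrightarrow> \<exists>c d Z. complement n a b = Some c \<and>
    complement n b a = Some d \<and> eqw n R (c @ Z) \<and> eqw n Q (d @ Z)"
  using \<open>eqw n w (b # Q)\<close>[unfolded eqw_def]
proof (induction arbitrary: a R rule: converse_rtranclp_induct)
  case base
  then show ?case by (auto intro!: exI[of _ Q])
next
  case (step w0 w1)
  from step.hyps(1) obtain A B l r where lr: "defrel n l r \<or> defrel n r l"
    and w0: "w0 = A @ l @ B" and w1: "w1 = A @ r @ B" unfolding elem_step_def by blast
  have len: "length w1 = length w0" using elem_step_length[OF step.hyps(1)] by simp
  show ?case
  proof (cases A)
    case (Cons a0 A')
    with w0 step.prems have "a0 = a" and R: "R = A' @ l @ B" by auto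
    with step.IH[of a "A' @ r @ B"] len w0 w1 Cons step.prems obtain c d Z where
      "complement n a b = Some c" "complement n b a = Some d"
      "eqw n (A' @ r @ B) (c @ Z)" "eqw n Q (d @ Z)"
      by auto
    moreover have "eqw n R (A' @ r @ B)"
      unfolding R using lr defrel_eqw[of n l r A' B] defrel_eqw[of n r l A' B] eqw_sym by blast
    ultimately show ?thesis by (meson eqw_trans)
  next
    case Nil
    obtain a1 a' u v where l: "l = a1 # u" and r: "r = a' # v" and "a' \<noteq> a1"
      and u: "complement n a1 a' = Some u" and v: "complement n a' a1 = Some v"
      using lr by (blast dest: defrel_complement)
    have "a1 = a" using w0 Nil l step.prems by simp
    have R: "R = u @ B" using w0 Nil l step.prems by simp
    have len_vB: "length (v @ B) = k" using len w0 w1 Nil l r step.prems by simp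
    with step.IH[of a' "v @ B"] w1 Nil r obtain c' d' Z where
      "complement n a' b = Some c'" "complement n b a' = Some d'"
      "eqw n (v @ B) (c' @ Z)" "eqw n Q (d' @ Z)"
      by auto
    from lcm_upto_transfer[OF lcm u v \<open>a' \<noteq> a1\<close> this(1,2) _ this(3,4)] len_vB R \<open>a1 = a\<close>
    show ?thesis by simp
  qed
qed

lemma lcm_upto_all: "lcm_upto n k"
proof (induction k)
  case 0
  then show ?case unfolding lcm_upto_def by simp
next
  case (Suc k)
  show ?case unfolding lcm_upto_def
  proof (intro allI impI)
    fix a b R Q assume "length R < Suc k" and e: "eqw n (a # R) (b # Q)"
    then consider "length R < k" | "length R = k" by linarith
    then show "\<exists>c d Z. complement n a b = Some c \<and> complement n b a = Some d \<and>
      eqw n R (c @ Z) \<and> eqw n Q (d @ Z)"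
    proof cases
      case 1
      with Suc.IH e show ?thesis unfolding lcm_upto_def by blast
    next
      case 2
      with lcm_upto_extend[OF Suc.IH e] show ?thesis by simp
    qed
  qed
qed

lemma eqw_Cons_lcm:
  assumes "eqw n (a # R) (b # Q)"
  obtains c d Z where "complement n a b = Some c" "complement n b a = Some d"
    "eqw n R (c @ Z)" "eqw n Q (d @ Z)"
  using lcm_uptoD[OF lcm_upto_all lessI assms] by blast

lemma eqw_left_cancel: "eqw n (U @ Y) (U @ Z) \<Longrightarrow> eqw n Y Z"
  using lcm_upto_left_cancel[OF lcm_upto_all order_refl] .

section \<open>Nodes of the diagram\<close>

lemma eqw_Sig_commute:
  assumes "\<not> adjacent i j" "g = Sig j \<or> g = X j" "g \<noteq> Sig i"
    "1 \<le> i" "i \<le> n - 1" "1 \<le> j" "j \<le> n - 1"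
  shows "eqw n [Sig i, g] [g, Sig i]"
  using assms eqw_complement[of n "Sig i" g "[g]" "[Sig i]"]
  by (auto simp: complement_def valid_gen_def adjacent_commute)

lemma eqw_braid:
  assumes "adjacent i j" "1 \<le> i" "i \<le> n - 1" "1 \<le> j" "j \<le> n - 1"
  shows "eqw n [Sig j, Sig i, Sig j] [Sig i, Sig j, Sig i]"
  using assms eqw_complement[of n "Sig j" "Sig i" "[Sig i, Sig j]" "[Sig j, Sig i]"]
  by (auto simp: complement_def valid_gen_def adjacent_def)

lemma eqw_mixed:
  assumes "adjacent i j" "1 \<le> i" "i \<le> n - 1" "1 \<le> j" "j \<le> n - 1"
  shows "eqw n [Sig j, Sig i, X j] [X i, Sig j, Sig i]"
  using assms eqw_complement[of n "Sig j" "X i" "[Sig i, X j]" "[Sig j, Sig i]"]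
  by (auto simp: complement_def valid_gen_def adjacent_def)

lemma eqw_adjacent_lcm:
  assumes adj: "adjacent i j" and g: "g = Sig j \<or> g = X j"
    and ij: "1 \<le> i" "i \<le> n - 1" "1 \<le> j" "j \<le> n - 1"
    and e: "eqw n (Sig j # R) (Sig i # g # Q)"
  shows "\<exists>Z. eqw n Q (Sig i # Z)"
proof -
  from e obtain d Z where "complement n (Sig i) (Sig j) = Some d" "eqw n (g # Q) (d @ Z)"
    by (rule eqw_Cons_lcm)
  with adj ij have gQ: "eqw n (g # Q) (Sig j # Sig i # Z)"
    by (auto simp: complement_def valid_gen_def adjacent_def)
  show ?thesis
  proof (cases "g = Sig j")
    case True
    with gQ show ?thesis using eqw_left_cancel[of n "[Sig j]"] by auto
  next
    case False
    with g gQ have "eqw n (X j # Q) (Sig j # Sig i # Z)" by simp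
    then obtain c1 d1 Z1 where "complement n (X j) (Sig j) = Some c1"
      "complement n (Sig j) (X j) = Some d1" "eqw n Q (c1 @ Z1)" "eqw n (Sig i # Z) (d1 @ Z1)"
      by (rule eqw_Cons_lcm)
    with ij have Q: "eqw n Q (Sig j # Z1)" and Z: "eqw n (Sig i # Z) (X j # Z1)"
      by (auto simp: complement_def valid_gen_def)
    from Z obtain d2 Z2 where "complement n (X j) (Sig i) = Some d2" "eqw n Z1 (d2 @ Z2)"
      by (rule eqw_Cons_lcm)
    with adj ij have "eqw n Z1 (Sig i # Sig j # Z2)"
      by (auto simp: complement_def valid_gen_def adjacent_def)
    with Q have "eqw n Q ([Sig j, Sig i, Sig j] @ Z2)" by (auto dest: eqw_Cons intro: eqw_trans)
    also have "eqw n \<dots> ([Sig i, Sig j, Sig i] @ Z2)"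
      using eqw_append_right[OF eqw_braid[OF adj ij]] by simp
    finally show ?thesis by auto
  qed
qed

lemma nodeI: "valid_word n W \<Longrightarrow> eqw n W (P @ Q) \<Longrightarrow> node n W P"
  unfolding node_def using eqw_valid_word[of n W "P @ Q"] by (auto simp: valid_word_def)

lemma nodeE:
  assumes "node n W P"
  obtains Q where "eqw n W (P @ Q)"
  using assms unfolding node_def by blast

lemma node_valid_word: "node n W P \<Longrightarrow> valid_word n W"
  unfolding node_def using eqw_valid_word by (fastforce simp: valid_word_def)

lemma node_prefix: "node n W (P @ Q) \<Longrightarrow> node n W P"
  by (metis nodeE nodeI node_valid_word append.assoc)

lemma node_eqw: "node n W P \<Longrightarrow> eqw n P P' \<Longrightarrow> node n W P'"
  by (metis nodeE nodeI node_valid_word eqw_append_right eqw_trans)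

lemma node_lcm:
  assumes "node n W (P @ [a])" "node n W (P @ [b])"
  shows "\<exists>d. complement n b a = Some d \<and> node n W (P @ b # d)"
proof -
  obtain R Q where "eqw n W (P @ a # R)" "eqw n W (P @ b # Q)"
    using assms by (metis nodeE append.assoc append_Cons append_Nil)
  then have "eqw n (a # R) (b # Q)" by (meson eqw_left_cancel eqw_sym eqw_trans)
  then obtain d Z where "complement n b a = Some d" "eqw n Q (d @ Z)"
    by (rule eqw_Cons_lcm)
  moreover from this \<open>eqw n W (P @ b # Q)\<close> have "eqw n W ((P @ b # d) @ Z)"
    using eqw_trans eqw_append_left[of n Q "d @ Z" "P @ [b]"] by simp
  ultimately show ?thesis using nodeI node_valid_word assms(1) by blast
qed

lemma node_adjacent:
  assumes "adjacent i j" "g = Sig j \<or> g = X j" "1 \<le> i" "i \<le> n - 1" "1 \<le> j" "j \<le> n - 1"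
    and "node n W (P @ [Sig j])" "node n W (P @ [Sig i, g])"
  shows "node n W (P @ [Sig i, g, Sig i])"
proof -
  obtain R Q where "eqw n W (P @ Sig j # R)" "eqw n W (P @ Sig i # g # Q)"
    using assms(7,8) by (metis nodeE append.assoc append_Cons append_Nil)
  then have "eqw n (Sig j # R) (Sig i # g # Q)" by (meson eqw_left_cancel eqw_sym eqw_trans)
  then obtain Z where "eqw n Q (Sig i # Z)" using eqw_adjacent_lcm assms(1-6) by blast
  with \<open>eqw n W (P @ Sig i # g # Q)\<close> have "eqw n W ((P @ [Sig i, g, Sig i]) @ Z)"
    using eqw_trans eqw_append_left[of n Q "Sig i # Z" "P @ [Sig i, g]"] by simp
  then show ?thesis using nodeI node_valid_word assms(7) by blast
qed

definition incident_Sig :: "nat \<Rightarrow> gen list \<Rightarrow> gen list \<Rightarrow> nat \<Rightarrow> bool" where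
  "incident_Sig n W P i = (node n W (P @ [Sig i]) \<or> (\<exists>P'. node n W P' \<and> eqw n P (P' @ [Sig i])))"

lemma incident_Sig_lcm:
  assumes "node n W (P @ [Sig i])" "node n W (P @ [g])" "g \<noteq> Sig i"
  shows "incident_Sig n W (P @ [g]) i"
proof -
  from node_lcm[OF assms(1,2)] obtain d where
    "complement n g (Sig i) = Some d" "node n W (P @ g # d)"
    by blast
  moreover from this(1) assms(3) obtain d' where "d = Sig i # d'"
    using complement_Sig_hd by blast
  ultimately have "node n W ((P @ [g, Sig i]) @ d')" by simp
  then show ?thesis unfolding incident_Sig_def using node_prefix by fastforce
qed

lemma incident_Sig_commute:
  assumes "\<not> adjacent i j" "g = Sig j \<or> g = X j" "g \<noteq> Sig i"
    "1 \<le> i" "i \<le> n - 1" "1 \<le> j" "j \<le> n - 1"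
    and "node n W P" "eqw n P (P' @ [Sig i, g])"
  shows "incident_Sig n W P i"
proof -
  from assms(1-7) have "eqw n [Sig i, g] [g, Sig i]" by (rule eqw_Sig_commute)
  from eqw_trans[OF assms(9) eqw_append_left[OF this]]
  have "eqw n P ((P' @ [g]) @ [Sig i])" by simp
  moreover from node_eqw[OF assms(8) this] have "node n W (P' @ [g])"
    by (rule node_prefix)
  ultimately show ?thesis unfolding incident_Sig_def by blast
qed

lemma incident_Sig_adjacent:
  assumes adj: "adjacent i j" and g: "g = Sig j \<or> g = X j"
    and ij: "1 \<le> i" "i \<le> n - 1" "1 \<le> j" "j \<le> n - 1"
    and "node n W P" and P: "eqw n P (P' @ [Sig i, g])" and "incident_Sig n W P' j"
  shows "incident_Sig n W P i"
proof -
  have node_ig: "node n W (P' @ [Sig i, g])" using node_eqw[OF assms(7) P] .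
  from \<open>incident_Sig n W P' j\<close> consider
    (here) "node n W (P' @ [Sig j])" | (before) P1 where "eqw n P' (P1 @ [Sig j])"
    unfolding incident_Sig_def by blast
  then show ?thesis
  proof cases
    case here
    have "eqw n (P' @ [Sig i, g, Sig i]) (P @ [Sig i])"
      using eqw_sym[OF eqw_append_right[OF P, of "[Sig i]"]] by simp
    with node_adjacent[OF adj g ij here node_ig] show ?thesis
      unfolding incident_Sig_def using node_eqw by blast
  next
    case before
    from g obtain h where braid: "eqw n [Sig j, Sig i, g] [h, Sig j, Sig i]"
      using eqw_braid[OF adj ij] eqw_mixed[OF adj ij] by blast
    have "eqw n P (P1 @ [Sig j, Sig i, g])"
      using eqw_trans[OF P eqw_append_right[OF before, of "[Sig i, g]"]] by simp
    also have "eqw n \<dots> ((P1 @ [h, Sig j]) @ [Sig i])"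
      using eqw_append_left[OF braid] by simp
    finally have "eqw n P ((P1 @ [h, Sig j]) @ [Sig i])" .
    moreover from node_eqw[OF assms(7) this] have "node n W (P1 @ [h, Sig j])"
      by (rule node_prefix)
    ultimately show ?thesis unfolding incident_Sig_def by blast
  qed
qed

lemma incident_Sig_all:
  assumes divisible: "\<And>i. 1 \<le> i \<Longrightarrow> i \<le> n - 1 \<Longrightarrow> node n W [Sig i]"
  shows "node n W P \<Longrightarrow> 1 \<le> i \<Longrightarrow> i \<le> n - 1 \<Longrightarrow> incident_Sig n W P i"
proof (induction "length P" arbitrary: P i rule: less_induct)
  case less
  note i = less.prems(2,3)
  show ?case
  proof (cases P rule: rev_cases)
    case Nil
    with divisible i show ?thesis unfolding incident_Sig_def by simp
  next
    case (snoc P0 g)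
    have "node n W P0" using less.prems(1) snoc node_prefix by blast
    show ?thesis
    proof (cases "g = Sig i")
      case True
      with snoc \<open>node n W P0\<close> show ?thesis unfolding incident_Sig_def by auto
    next
      case g_ne: False
      from less.hyps[of P0 i] \<open>node n W P0\<close> i snoc consider
        (here) "node n W (P0 @ [Sig i])" | (before) P0' where "node n W P0'" "eqw n P0 (P0' @ [Sig i])"
        unfolding incident_Sig_def by auto
      then show ?thesis
      proof cases
        case here
        with less.prems(1) snoc g_ne show ?thesis by (simp add: incident_Sig_lcm)
      next
        case before
        have P: "eqw n P (P0' @ [Sig i, g])"
          using eqw_append_right[OF before(2), of "[g]"] snoc by simp
        obtain j where g: "g = Sig j \<or> g = X j" by (cases g) auto
        with less.prems(1) snoc have j: "1 \<le> j" "j \<le> n - 1"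
          by (auto simp: node_def valid_word_def valid_gen_def)
        show ?thesis
        proof (cases "adjacent i j")
          case False
          from incident_Sig_commute[OF False g g_ne i j less.prems(1) P] show ?thesis .
        next
          case True
          have "length P0' < length P" using eqw_length[OF before(2)] snoc by simp
          from less.hyps[OF this before(1) j]
          show ?thesis by (rule incident_Sig_adjacent[OF True g i j less.prems(1) P])
        qed
      qed
    qed
  qed
qed

section \<open>Left divisors of Delta\<close>

definition Sig_upto :: "nat \<Rightarrow> gen list" where
  "Sig_upto k = map Sig [1..<Suc k]"

lemma Sig_upto_0 [simp]: "Sig_upto 0 = []"
  unfolding Sig_upto_def by simp

lemma Sig_upto_Suc: "Sig_upto (Suc k) = Sig_upto k @ [Sig (Suc k)]"
  unfolding Sig_upto_def by simp

lemma Delta_Suc: "1 \<le> m \<Longrightarrow> Delta (Suc m) = Sig_upto m @ Delta m"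
  unfolding Delta_def Sig_upto_def by (simp add: upt_Suc_append)

lemma Sig_upto_commute:
  "k + 1 < j \<Longrightarrow> j \<le> n - 1 \<Longrightarrow> eqw n (Sig_upto k @ [Sig j]) (Sig j # Sig_upto k)"
proof (induction k)
  case (Suc k)
  then have "defrel n [Sig (Suc k), Sig j] [Sig j, Sig (Suc k)]"
    by (intro defrel.ss_comm) auto
  from defrel_eqw[OF this, of "Sig_upto k" "[]"]
  have "eqw n (Sig_upto (Suc k) @ [Sig j]) ((Sig_upto k @ [Sig j]) @ [Sig (Suc k)])"
    by (simp add: Sig_upto_Suc)
  also have "eqw n \<dots> ((Sig j # Sig_upto k) @ [Sig (Suc k)])"
    using Suc by (intro eqw_append_right) simp
  finally show ?case by (simp add: Sig_upto_Suc)
qed simp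

lemma Sig_upto_shift:
  "1 \<le> i \<Longrightarrow> i < m \<Longrightarrow> m \<le> n - 1 \<Longrightarrow> eqw n (Sig_upto m @ [Sig i]) (Sig (Suc i) # Sig_upto m)"
proof (induction m)
  case (Suc m)
  show ?case
  proof (cases "i < m")
    case True
    with Suc.prems have "defrel n [Sig (Suc m), Sig i] [Sig i, Sig (Suc m)]"
      by (intro defrel.ss_comm) auto
    from defrel_eqw[OF this, of "Sig_upto m" "[]"]
    have "eqw n (Sig_upto (Suc m) @ [Sig i]) ((Sig_upto m @ [Sig i]) @ [Sig (Suc m)])"
      by (simp add: Sig_upto_Suc)
    also have "eqw n \<dots> ((Sig (Suc i) # Sig_upto m) @ [Sig (Suc m)])"
      using Suc True by (intro eqw_append_right) simp
    finally show ?thesis by (simp add: Sig_upto_Suc)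
  next
    case False
    with Suc.prems obtain q where m: "m = Suc q" "i = m" by (cases m) auto
    with Suc.prems have "defrel n [Sig m, Sig (Suc m), Sig m] [Sig (Suc m), Sig m, Sig (Suc m)]"
      using defrel.braid[of m n] by simp
    from defrel_eqw[OF this, of "Sig_upto q" "[]"]
    have "eqw n (Sig_upto (Suc m) @ [Sig i]) ((Sig_upto q @ [Sig (Suc m)]) @ [Sig m, Sig (Suc m)])"
      using m by (simp add: Sig_upto_Suc)
    also have "eqw n \<dots> ((Sig (Suc m) # Sig_upto q) @ [Sig m, Sig (Suc m)])"
      using Suc.prems m by (intro eqw_append_right Sig_upto_commute) auto
    finally show ?thesis using m by (simp add: Sig_upto_Suc)
  qed
qed simp

lemma Sig_left_divides_Delta: "1 \<le> i \<Longrightarrow> i < m \<Longrightarrow> m \<le> n \<Longrightarrow> \<exists>D. eqw n (Delta m) (Sig i # D)"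
proof (induction m arbitrary: i)
  case (Suc m)
  then have Delta: "Delta (Suc m) = Sig_upto m @ Delta m" by (simp add: Delta_Suc)
  show ?case
  proof (cases "i = 1")
    case True
    from Suc.prems obtain rest where "Sig_upto m = Sig 1 # rest"
      unfolding Sig_upto_def by (simp add: upt_conv_Cons del: upt_Suc)
    with True Delta show ?thesis by (auto intro!: exI[of _ "rest @ Delta m"])
  next
    case False
    with Suc.prems have "1 \<le> i - 1" "i - 1 < m" "m \<le> n" by auto
    then obtain D where D: "eqw n (Delta m) (Sig (i - 1) # D)" using Suc.IH by blast
    have "eqw n (Delta (Suc m)) ((Sig_upto m @ [Sig (i - 1)]) @ D)"
      using Delta eqw_append_left[OF D, of "Sig_upto m"] by simp
    also have "eqw n \<dots> ((Sig (Suc (i - 1)) # Sig_upto m) @ D)"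
      using Suc.prems False by (intro eqw_append_right Sig_upto_shift) auto
    also have "Suc (i - 1) = i" using Suc.prems by simp
    finally show ?thesis by auto
  qed
qed simp

theorem theorem3p1:
  fixes n :: nat and W V P :: "gen list" and i :: nat
  assumes "n \<ge> 2"
    and "valid_word n W" and "valid_word n V"
    and "eqw n W (Delta n @ V)"
    and "node n W P"
    and "1 \<le> i" and "i \<le> n - 1"
  shows "node n W (P @ [Sig i]) \<or> (\<exists>P'. node n W P' \<and> eqw n P (P' @ [Sig i]))"
proof -
  have "node n W [Sig k]" if "1 \<le> k" "k \<le> n - 1" for k
  proof -
    from that have "k < n" by linarith
    with that obtain D where "eqw n (Delta n) (Sig k # D)"
      using Sig_left_divides_Delta[of k n n] by blast
    from eqw_trans[OF assms(4) eqw_append_right[OF this]] have "eqw n W ([Sig k] @ D @ V)"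
      by simp
    with assms(2) show ?thesis by (rule nodeI)
  qed
  from incident_Sig_all[OF this assms(5-7)] show ?thesis unfolding incident_Sig_def .
qed

end
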